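(* Under the standing setting and assumptions (A1)–(A3) described in the context, assume $\mathcal R(X)\neq\emptyset$ for every $X\in\mathcal X$. Then the following are equivalent: (a) $|\mathcal R(X)|=1$ for every $X\in\mathcal X$; (b) $|\mathcal R(X)|=1$ for every $X\in\partial\mathcal A\cap\partial(\mathcal A+\ker(\pi))$; (c) $\partial\mathcal A\cap\partial(\mathcal A+\ker(\pi))\cap(\partial\mathcal A+(\ker(\pi)\setminus\{0\}))=\emptyset$; (d) $\partial\mathcal A\cap(\partial\mathcal A+(\ker(\pi)\setminus\{0\}))\subset\mathrm{int}(\mathcal A+\ker(\pi))$.
   Context: Let $\mathcal X$ be a Hausdorff, first countable, locally convex topological vector space over $\mathbb R$, partially ordered by a partial order $\geq$ with positive cone $\mathcal X_+=\{X\in\mathcal X: X\geq 0\}$. Let $\mathcal M\subset\mathcal X$ be a vector subspace with $1<\dim\mathcal M<\infty$, carrying the relative topology, and let $\pi:\mathcal M\to\mathbb R$ be linear with $\ker(\pi)=\{Z\in\mathcal M:\pi(Z)=0\}$. Standing assumptions: (A1) there is $U\in\mathcal M\cap\mathcal X_+$ with $\pi(U)=1$; (A2) $\mathcal A\subsetneq\mathcal X$ is closed, contains $0$, and satisfies $\mathcal A+\mathcal X_+\subset\mathcal A$; (A3) the map $\rho(X)=\inf\{\pi(Z): Z\in\mathcal M,\ X+Z\in\mathcal A\}$ is finitely valued and continuous on $\mathcal X$. The optimal payoff map is $\mathcal R(X)=\{Z\in\mathcal M: X+Z\in\mathcal A,\ \pi(Z)=\rho(X)\}$; $|\cdot|$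 is cardinality. $\partial$ and $\mathrm{int}$ denote boundary and interior in $\mathcal X$. *)

theory Defs
  imports "HOL-Analysis.Analysis"
begin

text \<open>The type carries a real vector space structure and a topology (t2, first countable);
  the remaining conditions are stated explicitly.\<close>
definition locally_convex_tvs :: "'a::{real_vector, topological_space} itself \<Rightarrow> bool" where
  "locally_convex_tvs _ \<longleftrightarrow>
     continuous_on UNIV (\<lambda>p::'a \<times> 'a. fst p + snd p) \<and>
     continuous_on UNIV (\<lambda>p::real \<times> 'a. fst p *\<^sub>R snd p) \<and>
     (\<forall>W. open W \<and> (0::'a) \<in> W \<longrightarrow> (\<exists>V. open V \<and> convex V \<and> 0 \<in> V \<and> V \<subseteq> W))"

text \<open>A partial order on a real vector space compatible with the linear structure
  (ordered vector space); \<open>ge X Y\<close> means X \<ge> Y.\<close>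
definition vector_partial_order :: "('a::real_vector \<Rightarrow> 'a \<Rightarrow> bool) \<Rightarrow> bool" where
  "vector_partial_order ge \<longleftrightarrow>
     (\<forall>x. ge x x) \<and>
     (\<forall>x y. ge x y \<and> ge y x \<longrightarrow> x = y) \<and>
     (\<forall>x y z. ge x y \<and> ge y z \<longrightarrow> ge x z) \<and>
     (\<forall>x y z. ge x y \<longrightarrow> ge (x + z) (y + z)) \<and>
     (\<forall>x y (c::real). ge x y \<and> 0 \<le> c \<longrightarrow> ge (c *\<^sub>R x) (c *\<^sub>R y))"

definition pos_cone :: "('a::real_vector \<Rightarrow> 'a \<Rightarrow> bool) \<Rightarrow> 'a set" where
  "pos_cone ge = {X. ge X 0}"

definition msum :: "'a::plus set \<Rightarrow> 'a set \<Rightarrow> 'a set" where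
  "msum A B = {a + b | a b. a \<in> A \<and> b \<in> B}"

definition linear_on :: "'a::real_vector set \<Rightarrow> ('a \<Rightarrow> real) \<Rightarrow> bool" where
  "linear_on M f \<longleftrightarrow>
     (\<forall>x\<in>M. \<forall>y\<in>M. f (x + y) = f x + f y) \<and> (\<forall>c. \<forall>x\<in>M. f (c *\<^sub>R x) = c * f x)"

definition kerM :: "'a::real_vector set \<Rightarrow> ('a \<Rightarrow> real) \<Rightarrow> 'a set" where
  "kerM M p = {Z \<in> M. p Z = 0}"

definition rho :: "'a::real_vector set \<Rightarrow> ('a \<Rightarrow> real) \<Rightarrow> 'a set \<Rightarrow> 'a \<Rightarrow> real" where
  "rho M p A X = Inf {p Z | Z. Z \<in> M \<and> X + Z \<in> A}"

definition optR :: "'a::real_vector set \<Rightarrow> ('a \<Rightarrow> real) \<Rightarrow> 'a set \<Rightarrow> 'a \<Rightarrow> 'a set" where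
  "optR M p A X = {Z \<in> M. X + Z \<in> A \<and> p Z = rho M p A X}"

end

theory Submission
  imports Defs
begin

text \<open>Since \<open>U\<close> is an eligible payoff of price one, \<open>\<rho>\<close> is cash-additive along \<open>\<M>\<close>:
  \<open>\<rho>(X + W) = \<rho>(X) - \<pi>(W)\<close>. Hence \<open>\<A> + ker \<pi>\<close> is the sublevel set \<open>{\<rho> \<le> 0}\<close>, its
  interior is \<open>{\<rho> < 0}\<close> and its boundary \<open>{\<rho> = 0}\<close>; and \<open>Z\<close> is an optimal payoff for \<open>X\<close>
  exactly when \<open>X + Z\<close> lies in \<open>\<A>\<close> on the zero level of \<open>\<rho>\<close>. Two distinct optimal payoffs
  \<open>Z\<^sub>1 \<noteq> Z\<^sub>2\<close> for \<open>X\<close> therefore produce the point \<open>X + Z\<^sub>1 = (X + Z\<^sub>2) + (Z\<^sub>1 - Z\<^sub>2)\<close> of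
  \<open>\<partial>\<A> \<inter> \<partial>(\<A> + ker \<pi>) \<inter> (\<partial>\<A> + ker \<pi> \<setminus> {0})\<close>, and conversely every such point has the two
  optimal payoffs \<open>0\<close> and \<open>-k\<close>. All four conditions say that this set is empty.\<close>

lemma linear_on_zero:
  assumes "subspace M" "linear_on M p"
  shows "p 0 = 0"
  using assms subspace_0[OF assms(1)] unfolding linear_on_def
  by (metis mult_zero_left scale_zero_left)

lemma linear_on_diff:
  assumes "subspace M" "linear_on M p" "x \<in> M" "y \<in> M"
  shows "p (x - y) = p x - p y"
proof -
  have scale: "\<forall>c. p (c *\<^sub>R y) = c * p y"
    using assms(2,4) unfolding linear_on_def by blast
  have "p (x + (-1) *\<^sub>R y) = p x + p ((-1) *\<^sub>R y)"
    using assms subspace_scale[OF assms(1) assms(4)] unfolding linear_on_def by blast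
  also have "\<dots> = p x + (-1) * p y"
    by (simp only: scale)
  finally show ?thesis
    by simp
qed

lemma linear_on_minus:
  assumes "subspace M" "linear_on M p" "x \<in> M"
  shows "p (- x) = - p x"
  using linear_on_diff[OF assms(1,2) subspace_0[OF assms(1)] assms(3)] linear_on_zero[OF assms(1,2)]
  by simp

lemma pos_cone_scaleR:
  assumes "vector_partial_order ge" "v \<in> pos_cone ge" "0 \<le> c"
  shows "c *\<^sub>R v \<in> pos_cone ge"
proof -
  have "ge (c *\<^sub>R v) (c *\<^sub>R 0)"
    using assms unfolding vector_partial_order_def pos_cone_def by blast
  then show ?thesis
    unfolding pos_cone_def by simp
qed

lemma continuous_on_line:
  fixes v :: "'a::{real_vector, topological_space}"
  assumes "locally_convex_tvs TYPE('a)"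
  shows "continuous_on UNIV (\<lambda>t::real. X + t *\<^sub>R v)"
proof -
  have add: "continuous_on UNIV (\<lambda>q::'a \<times> 'a. fst q + snd q)"
    and scale: "continuous_on UNIV (\<lambda>q::real \<times> 'a. fst q *\<^sub>R snd q)"
    using assms unfolding locally_convex_tvs_def by blast+
  have "continuous_on UNIV ((\<lambda>q::real \<times> 'a. fst q *\<^sub>R snd q) \<circ> (\<lambda>t. (t, v)))"
    by (rule continuous_on_compose)
      (auto intro!: continuous_on_Pair continuous_on_id continuous_on_const continuous_on_subset[OF scale])
  then have "continuous_on UNIV (\<lambda>t::real. (X, t *\<^sub>R v))"
    by (intro continuous_on_Pair continuous_on_const) (simp add: o_def)
  then have "continuous_on UNIV ((\<lambda>q::'a \<times> 'a. fst q + snd q) \<circ> (\<lambda>t. (X, t *\<^sub>R v)))"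
    using continuous_on_subset[OF add] by (rule continuous_on_compose) auto
  then show ?thesis
    by (simp add: o_def)
qed

lemma msum_memI: "a \<in> A \<Longrightarrow> b \<in> B \<Longrightarrow> a + b \<in> msum A B"
  unfolding msum_def by blast

lemma card_eq_1_iff_all_eq:
  assumes "S \<noteq> {}"
  shows "card S = 1 \<longleftrightarrow> (\<forall>x\<in>S. \<forall>y\<in>S. x = y)"
proof
  assume "card S = 1"
  then obtain x where "S = {x}"
    by (auto simp: card_1_singleton_iff)
  then show "\<forall>x\<in>S. \<forall>y\<in>S. x = y"
    by simp
next
  assume all_eq: "\<forall>x\<in>S. \<forall>y\<in>S. x = y"
  obtain x where "x \<in> S"
    using assms by blast
  with all_eq have "S = {x}"
    by blast
  then show "card S = 1"
    by simp
qed

locale multi_asset_risk_measure =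
  fixes M :: "'a::real_vector set" and p :: "'a \<Rightarrow> real" and A :: "'a set" and U :: 'a
  assumes subspace_M: "subspace M"
    and linear_p: "linear_on M p"
    and U_in_M: "U \<in> M"
    and price_U: "p U = 1"
    and A_upward: "\<And>Y t. Y \<in> A \<Longrightarrow> 0 \<le> t \<Longrightarrow> Y + t *\<^sub>R U \<in> A"
    and bdd_prices: "\<And>X. bdd_below {p Z | Z. Z \<in> M \<and> X + Z \<in> A}"
    and optR_nonempty: "\<And>X. optR M p A X \<noteq> {}"
begin

abbreviation \<rho> where "\<rho> \<equiv> rho M p A"

abbreviation K where "K \<equiv> kerM M p"

lemma rho_le_price:
  assumes "Z \<in> M" "X + Z \<in> A"
  shows "\<rho> X \<le> p Z"
  unfolding rho_def using assms bdd_prices[of X] by (intro cInf_lower) auto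

lemma rho_attained:
  obtains Z where "Z \<in> M" "X + Z \<in> A" "p Z = \<rho> X"
  using optR_nonempty[of X] unfolding optR_def by blast

lemma rho_translate:
  assumes W: "W \<in> M"
  shows "\<rho> (X + W) = \<rho> X - p W"
proof (rule antisym)
  obtain Z where Z: "Z \<in> M" "X + Z \<in> A" "p Z = \<rho> X"
    using rho_attained .
  have "\<rho> (X + W) \<le> p (Z - W)"
    using Z W subspace_M by (intro rho_le_price) (auto simp: subspace_diff)
  then show "\<rho> (X + W) \<le> \<rho> X - p W"
    using Z linear_on_diff[OF subspace_M linear_p Z(1) W] by simp
next
  obtain Z where Z: "Z \<in> M" "X + W + Z \<in> A" "p Z = \<rho> (X + W)"
    using rho_attained .
  have "\<rho> X \<le> p (W + Z)"
    using Z W subspace_M by (intro rho_le_price) (auto simp: subspace_add add.assoc)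
  then show "\<rho> X - p W \<le> \<rho> (X + W)"
    using Z W linear_p unfolding linear_on_def by simp
qed

lemma rho_translate_U: "\<rho> (X + t *\<^sub>R U) = \<rho> X - t"
  using rho_translate[of "t *\<^sub>R U"] U_in_M price_U subspace_M linear_p
  unfolding linear_on_def by (simp add: subspace_scale)

lemma rho_nonpos_of_mem: "X \<in> A \<Longrightarrow> \<rho> X \<le> 0"
  using rho_le_price[of 0 X] subspace_0[OF subspace_M] linear_on_zero[OF subspace_M linear_p]
  by simp

lemma rho_translate_kerM: "k \<in> K \<Longrightarrow> \<rho> (X + k) = \<rho> X"
  using rho_translate by (simp add: kerM_def)

lemma optR_iff: "Z \<in> optR M p A X \<longleftrightarrow> Z \<in> M \<and> X + Z \<in> A \<and> \<rho> (X + Z) = 0"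
  using rho_translate[of Z X] unfolding optR_def by auto

lemma msum_kerM_eq_sublevel: "msum A K = {X. \<rho> X \<le> 0}"
proof safe
  fix X assume "X \<in> msum A K"
  then obtain Y k where "Y \<in> A" "k \<in> K" "X = Y + k"
    unfolding msum_def by blast
  then show "\<rho> X \<le> 0"
    using rho_translate_kerM rho_nonpos_of_mem by simp
next
  fix X assume X: "\<rho> X \<le> 0"
  obtain Z where Z: "Z \<in> M" "X + Z \<in> A" "p Z = \<rho> X"
    using rho_attained .
  define Y where "Y = X + Z + (- \<rho> X) *\<^sub>R U"
  define k where "k = \<rho> X *\<^sub>R U - Z"
  have "Y \<in> A"
    using A_upward[of "X + Z" "- \<rho> X"] Z(2) X unfolding Y_def by simp
  have UM: "\<rho> X *\<^sub>R U \<in> M"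
    using U_in_M subspace_M by (simp add: subspace_scale)
  have "p (\<rho> X *\<^sub>R U) = \<rho> X"
    using U_in_M price_U linear_p unfolding linear_on_def by simp
  then have "p k = 0"
    unfolding k_def using linear_on_diff[OF subspace_M linear_p UM Z(1)] Z(3) by simp
  moreover have "k \<in> M"
    unfolding k_def using UM Z(1) subspace_M by (simp add: subspace_diff)
  ultimately have "k \<in> K"
    by (simp add: kerM_def)
  moreover have "X = Y + k"
    unfolding Y_def k_def by (simp add: algebra_simps)
  ultimately show "X \<in> msum A K"
    using msum_memI[OF \<open>Y \<in> A\<close>] by simp
qed

end

locale continuous_multi_asset_risk_measure =
  multi_asset_risk_measure M p A U
  for M :: "'a::{real_vector, topological_space} set" and p A U +
  assumes closed_A: "closed A"
    and continuous_rho: "continuous_on UNIV (rho M p A)"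
    and continuous_line_U: "\<And>X. continuous_on UNIV (\<lambda>t::real. X + t *\<^sub>R U)"
begin

text \<open>Shifting \<open>Y\<close> slightly in direction \<open>-U\<close> keeps it in \<open>S\<close> and raises \<open>\<rho>\<close> by the
  size of the shift.\<close>

lemma rho_neg_of_mem_interior:
  assumes S: "S \<subseteq> {X. \<rho> X \<le> 0}" and Y: "Y \<in> interior S"
  shows "\<rho> Y < 0"
proof -
  define g where "g = (\<lambda>t::real. Y + t *\<^sub>R U)"
  have "open (g -` interior S)"
    using continuous_on_open_vimage[OF open_UNIV] continuous_line_U unfolding g_def by auto
  moreover have "0 \<in> g -` interior S"
    using Y unfolding g_def by simp
  ultimately obtain e where e: "e > 0" "ball 0 e \<subseteq> g -` interior S"
    using open_contains_ball by metis
  have "- e / 2 \<in> g -` interior S"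
    by (rule subsetD[OF e(2)]) (use e(1) in \<open>simp add: dist_real_def\<close>)
  then have "g (- e / 2) \<in> interior S"
    by simp
  then have "g (- e / 2) \<in> S"
    using interior_subset by blast
  then have "\<rho> (Y + (- e / 2) *\<^sub>R U) \<le> 0"
    using S unfolding g_def by blast
  then show ?thesis
    using rho_translate_U[of Y "- e / 2"] e(1) by linarith
qed

lemma interior_msum_kerM: "interior (msum A K) = {X. \<rho> X < 0}"
proof
  show "interior (msum A K) \<subseteq> {X. \<rho> X < 0}"
  proof
    fix Y assume "Y \<in> interior (msum A K)"
    then show "Y \<in> {X. \<rho> X < 0}"
      using rho_neg_of_mem_interior[of "msum A K" Y] msum_kerM_eq_sublevel by simp
  qed
  have "open {X. \<rho> X < 0}"
    using open_Collect_less[OF continuous_rho continuous_on_const] by simp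
  then show "{X. \<rho> X < 0} \<subseteq> interior (msum A K)"
    by (rule interior_maximal[rotated]) (auto simp: msum_kerM_eq_sublevel)
qed

lemma frontier_msum_kerM: "frontier (msum A K) = {X. \<rho> X = 0}"
proof -
  have "closed {X. \<rho> X \<le> 0}"
    using closed_Collect_le[OF continuous_rho continuous_on_const] by simp
  then have "closure (msum A K) = {X. \<rho> X \<le> 0}"
    by (simp add: msum_kerM_eq_sublevel)
  then have "frontier (msum A K) = {X. \<rho> X \<le> 0} - {X. \<rho> X < 0}"
    by (simp add: frontier_def interior_msum_kerM)
  also have "\<dots> = {X. \<rho> X = 0}"
    by auto
  finally show ?thesis .
qed

lemma frontier_inter_frontier_msum_kerM:
  "frontier A \<inter> frontier (msum A K) = {X \<in> A. \<rho> X = 0}"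
proof (intro equalityI subsetI)
  fix Y assume "Y \<in> frontier A \<inter> frontier (msum A K)"
  then show "Y \<in> {X \<in> A. \<rho> X = 0}"
    using frontier_subset_closed[OF closed_A] frontier_msum_kerM by blast
next
  fix Y assume Y: "Y \<in> {X \<in> A. \<rho> X = 0}"
  have "A \<subseteq> {X. \<rho> X \<le> 0}"
    using rho_nonpos_of_mem by blast
  then have "Y \<notin> interior A"
    using rho_neg_of_mem_interior[of A Y] Y by auto
  moreover have "Y \<in> closure A"
    using Y closure_subset by blast
  ultimately have "Y \<in> frontier A"
    by (simp add: frontier_def)
  then show "Y \<in> frontier A \<inter> frontier (msum A K)"
    using Y by (simp add: frontier_msum_kerM)
qed

lemma optR_not_unique_if_mem:
  assumes "X \<in> frontier A \<inter> frontier (msum A K) \<inter> msum (frontier A) (K - {0})"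
  obtains Z\<^sub>1 Z\<^sub>2 where "Z\<^sub>1 \<in> optR M p A X" "Z\<^sub>2 \<in> optR M p A X" "Z\<^sub>1 \<noteq> Z\<^sub>2"
proof -
  obtain Y k where Yk: "Y \<in> frontier A" "k \<in> K" "k \<noteq> 0" "X = Y + k"
    using assms unfolding msum_def by blast
  have X: "X \<in> A" "\<rho> X = 0"
    using assms frontier_inter_frontier_msum_kerM by auto
  have "0 \<in> optR M p A X"
    using X subspace_0[OF subspace_M] by (simp add: optR_iff)
  moreover have "- k \<in> optR M p A X"
  proof -
    have "- k \<in> K"
      using Yk(2) subspace_neg[OF subspace_M] linear_on_minus[OF subspace_M linear_p]
      by (simp add: kerM_def)
    then show ?thesis
      using X Yk frontier_subset_closed[OF closed_A] rho_translate_kerM[of "- k" X]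
      by (auto simp: optR_iff kerM_def)
  qed
  moreover have "0 \<noteq> - k"
    using Yk(3) by simp
  ultimately show ?thesis
    using that by blast
qed

lemma mem_if_optR_not_unique:
  assumes "Z\<^sub>1 \<in> optR M p A X" "Z\<^sub>2 \<in> optR M p A X" "Z\<^sub>1 \<noteq> Z\<^sub>2"
  shows "X + Z\<^sub>1 \<in> frontier A \<inter> frontier (msum A K) \<inter> msum (frontier A) (K - {0})"
proof -
  have Z: "Z\<^sub>1 \<in> M" "Z\<^sub>2 \<in> M" "X + Z\<^sub>1 \<in> frontier A \<inter> frontier (msum A K)"
    "X + Z\<^sub>2 \<in> frontier A \<inter> frontier (msum A K)"
    using assms by (auto simp: optR_iff frontier_inter_frontier_msum_kerM)
  have "\<rho> (X + Z\<^sub>1) = \<rho> (X + Z\<^sub>2)"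
    using assms by (simp add: optR_iff)
  then have "Z\<^sub>1 - Z\<^sub>2 \<in> K - {0}"
    using rho_translate[of "Z\<^sub>1 - Z\<^sub>2" "X + Z\<^sub>2"] Z assms(3) subspace_M
    by (simp add: kerM_def subspace_diff)
  then have "(X + Z\<^sub>2) + (Z\<^sub>1 - Z\<^sub>2) \<in> msum (frontier A) (K - {0})"
    using Z(4) by (intro msum_memI) auto
  then show ?thesis
    using Z(3) by simp
qed

lemma frontier_inter_msum_subset_interior:
  assumes "frontier A \<inter> frontier (msum A K) \<inter> msum (frontier A) (K - {0}) = {}"
  shows "frontier A \<inter> msum (frontier A) (K - {0}) \<subseteq> interior (msum A K)"
proof
  fix X assume X: "X \<in> frontier A \<inter> msum (frontier A) (K - {0})"
  then have "X \<in> A"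
    using frontier_subset_closed[OF closed_A] by blast
  have "\<rho> X \<noteq> 0"
  proof
    assume "\<rho> X = 0"
    then have "X \<in> frontier A \<inter> frontier (msum A K)"
      using \<open>X \<in> A\<close> frontier_inter_frontier_msum_kerM by simp
    then show False
      using X equals0D[OF assms, of X] by blast
  qed
  then show "X \<in> interior (msum A K)"
    using rho_nonpos_of_mem[OF \<open>X \<in> A\<close>] unfolding interior_msum_kerM by simp
qed

lemma disjoint_if_optR_unique:
  assumes "\<forall>X \<in> frontier A \<inter> frontier (msum A K). card (optR M p A X) = 1"
  shows "frontier A \<inter> frontier (msum A K) \<inter> msum (frontier A) (K - {0}) = {}"
proof (rule equals0I)
  fix X assume X: "X \<in> frontier A \<inter> frontier (msum A K) \<inter> msum (frontier A) (K - {0})"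
  then obtain Z\<^sub>1 Z\<^sub>2 where Z: "Z\<^sub>1 \<in> optR M p A X" "Z\<^sub>2 \<in> optR M p A X" "Z\<^sub>1 \<noteq> Z\<^sub>2"
    by (rule optR_not_unique_if_mem)
  have "card (optR M p A X) = 1"
    using assms X by blast
  then have "\<forall>Z\<in>optR M p A X. \<forall>Z'\<in>optR M p A X. Z = Z'"
    using card_eq_1_iff_all_eq[OF optR_nonempty[of X]] by blast
  then show False
    using Z by blast
qed

lemma optR_unique_if_subset_interior:
  assumes "frontier A \<inter> msum (frontier A) (K - {0}) \<subseteq> interior (msum A K)"
  shows "card (optR M p A X) = 1"
  unfolding card_eq_1_iff_all_eq[OF optR_nonempty]
proof (intro ballI, rule ccontr)
  fix Z\<^sub>1 Z\<^sub>2 assume "Z\<^sub>1 \<in> optR M p A X" "Z\<^sub>2 \<in> optR M p A X" "Z\<^sub>1 \<noteq> Z\<^sub>2"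
  then have Z\<^sub>1: "X + Z\<^sub>1 \<in> frontier A \<inter> frontier (msum A K) \<inter> msum (frontier A) (K - {0})"
    by (rule mem_if_optR_not_unique)
  then have "X + Z\<^sub>1 \<in> interior (msum A K)"
    using assms by blast
  then have "\<rho> (X + Z\<^sub>1) < 0"
    by (simp add: interior_msum_kerM)
  moreover have "\<rho> (X + Z\<^sub>1) = 0"
    using Z\<^sub>1 by (simp add: frontier_msum_kerM)
  ultimately show False
    by simp
qed

end

theorem mainTheorem11:
  fixes ge :: "'a::{real_vector, t2_space, first_countable_topology} \<Rightarrow> 'a \<Rightarrow> bool"
    and M :: "'a set" and p :: "'a \<Rightarrow> real" and A :: "'a set" and U :: 'a
  assumes tvs: "locally_convex_tvs TYPE('a)"
    and ord: "vector_partial_order ge"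
    and M_sub: "subspace M"
    and M_fin: "\<exists>B. finite B \<and> span B = M"
    and M_dim: "1 < dim M"
    and pi_lin: "linear_on M p"
    and A1: "U \<in> M" "U \<in> pos_cone ge" "p U = 1"
    and A2: "closed A" "A \<noteq> UNIV" "0 \<in> A" "msum A (pos_cone ge) \<subseteq> A"
    and A3_fin: "\<And>X. {p Z | Z. Z \<in> M \<and> X + Z \<in> A} \<noteq> {} \<and>
                       bdd_below {p Z | Z. Z \<in> M \<and> X + Z \<in> A}"
    and A3_cont: "continuous_on UNIV (rho M p A)"
    and Rne: "\<And>X. optR M p A X \<noteq> {}"
  shows "((\<forall>X. card (optR M p A X) = 1) \<longleftrightarrow>
          (\<forall>X \<in> frontier A \<inter> frontier (msum A (kerM M p)). card (optR M p A X) = 1))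
       \<and> ((\<forall>X \<in> frontier A \<inter> frontier (msum A (kerM M p)). card (optR M p A X) = 1) \<longleftrightarrow>
          frontier A \<inter> frontier (msum A (kerM M p))
            \<inter> msum (frontier A) (kerM M p - {0}) = {})
       \<and> ((frontier A \<inter> frontier (msum A (kerM M p))
            \<inter> msum (frontier A) (kerM M p - {0}) = {}) \<longleftrightarrow>
          frontier A \<inter> msum (frontier A) (kerM M p - {0})
            \<subseteq> interior (msum A (kerM M p)))"
proof -
  interpret continuous_multi_asset_risk_measure M p A U
  proof
    show "Y + t *\<^sub>R U \<in> A" if "Y \<in> A" "0 \<le> t" for Y t
      using msum_memI[OF that(1) pos_cone_scaleR[OF ord A1(2) that(2)]] A2(4) by blast
  qed (use M_sub pi_lin A1 A2(1) A3_fin A3_cont Rne continuous_on_line[OF tvs] in auto)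
  show ?thesis
    using disjoint_if_optR_unique frontier_inter_msum_subset_interior optR_unique_if_subset_interior
    by blast
qed

end
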